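(* In the setting described in the context, let $F$ be strongly convex with respect to $\|\cdot\|_L$ with convexity parameter $\mu>0$, and choose accuracy $\epsilon>0$, confidence $0<\rho<1$, and $$k\geq\frac{n}{1-\gamma_\mu}\log\left(\frac{F(x_0)-F^*}{\rho\epsilon}\right),$$ where $\gamma_\mu=1-\frac\mu4$ if $\mu\leq2$ and $\gamma_\mu=\frac1\mu$ otherwise. If $x_k$ is the random point generated by UCDC$(x_0)$, then $\mathbf{P}(F(x_k)-F^*\leq\epsilon)\geq1-\rho$.
   Context: Let $U\in\mathbf{R}^{N\times N}$ be a column permutation of the $N\times N$ identity matrix, partitioned as $U=[U_1,\dots,U_n]$ with $U_i\in\mathbf{R}^{N\times N_i}$, $\sum_iN_i=N$. For $x\in\mathbf{R}^N$ write $x^{(i)}=U_i^Tx$. Each $\mathbf{R}^{N_i}$ carries the norm $\|t\|_{(i)}=\langle B_it,t\rangle^{1/2}$ and dual norm $\|t\|_{(i)}^*=\langle B_i^{-1}t,t\rangle^{1/2}$ with $B_i$ positive definite. Consider minimizing $F(x)=f(x)+\Psi(x)$ over $\mathbf{R}^N$, where $f$ is convex and differentiable with $\|\nabla_if(x+U_it)-\nabla_if(x)\|_{(i)}^*\leq L_i\|t\|_{(i)}$ for all $x,t,i$ (constants $L_i>0$, $\nabla_if(x)=U_i^T\nabla f(x)$), and $\Psi(x)=\sum_i\Psi_i(x^{(i)})$ with each $\Psi_i$ proper closed convex. The problem has a minimizer; $F^*$ is the optimal value. Let $\|x\|_L=(\sum_iL_i\|x^{(i)}\|_{(i)}^2)^{1/2}$.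 Strong convexity w.r.t. $\|\cdot\|_L$ with parameter $\mu$: $F(x)\geq F(y)+\langle F'(y),x-y\rangle+\frac\mu2\|x-y\|_L^2$ for all $x,y\in\mathrm{dom}\,F$ and all subgradients $F'(y)$. Algorithm UCDC$(x_0)$: for $k=0,1,2,\dots$, choose $i\in\{1,\dots,n\}$ uniformly at random (independently), compute $T^{(i)}(x_k)=\arg\min_{t\in\mathbf{R}^{N_i}}\{\langle\nabla_if(x_k),t\rangle+\frac{L_i}{2}\|t\|_{(i)}^2+\Psi_i(x_k^{(i)}+t)\}$ and set $x_{k+1}=x_k+U_iT^{(i)}(x_k)$. *)

theory Defs
  imports "HOL-Analysis.Analysis" "HOL-Probability.Probability"
begin

text \<open>The permutation matrix U is encoded by
  sigma: the column number p (p < N) of U is the unit vector e_(sigma p).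
  Blocks are consecutive column groups: block i (i < n, 0-based) consists of the columns
  off i, ..., off i + Nb i - 1.  A block vector t in R^(Nb i) is a function nat => real
  whose entries beyond Nb i are zero.\<close>

definition off :: "(nat \<Rightarrow> nat) \<Rightarrow> nat \<Rightarrow> nat" where
  "off Nb i = (\<Sum>l<i. Nb l)"

definition bsub :: "(nat \<Rightarrow> nat) \<Rightarrow> nat \<Rightarrow> (nat \<Rightarrow> real) set" where
  "bsub Nb i = {t. \<forall>j. Nb i \<le> j \<longrightarrow> t j = 0}"

definition blk :: "(nat \<Rightarrow> 'N::finite) \<Rightarrow> (nat \<Rightarrow> nat) \<Rightarrow> nat \<Rightarrow> real^'N \<Rightarrow> (nat \<Rightarrow> real)" where
  "blk \<sigma> Nb i x = (\<lambda>j. if j < Nb i then x $ \<sigma> (off Nb i + j) else 0)"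

definition Uemb :: "(nat \<Rightarrow> 'N::finite) \<Rightarrow> (nat \<Rightarrow> nat) \<Rightarrow> nat \<Rightarrow> (nat \<Rightarrow> real) \<Rightarrow> real^'N" where
  "Uemb \<sigma> Nb i t = (\<chi> k. let p = inv_into {..<CARD('N)} \<sigma> k in
      if off Nb i \<le> p \<and> p < off Nb i + Nb i then t (p - off Nb i) else 0)"

definition qform :: "(nat \<Rightarrow> nat \<Rightarrow> real) \<Rightarrow> nat \<Rightarrow> (nat \<Rightarrow> real) \<Rightarrow> real" where
  "qform M m t = (\<Sum>j<m. \<Sum>l<m. M j l * t l * t j)"

definition pos_def_mat :: "(nat \<Rightarrow> nat \<Rightarrow> real) \<Rightarrow> nat \<Rightarrow> bool" where
  "pos_def_mat M m \<longleftrightarrow> (\<forall>j<m. \<forall>l<m. M j l = M l j) \<and>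
     (\<forall>t. (\<exists>j<m. t j \<noteq> 0) \<longrightarrow> qform M m t > 0)"

definition is_inv_mat :: "(nat \<Rightarrow> nat \<Rightarrow> real) \<Rightarrow> (nat \<Rightarrow> nat \<Rightarrow> real) \<Rightarrow> nat \<Rightarrow> bool" where
  "is_inv_mat M Mi m \<longleftrightarrow> (\<forall>j<m. \<forall>l<m. (\<Sum>p<m. M j p * Mi p l) = (if j = l then 1 else 0))"

definition bnorm :: "(nat \<Rightarrow> nat \<Rightarrow> nat \<Rightarrow> real) \<Rightarrow> (nat \<Rightarrow> nat) \<Rightarrow> nat \<Rightarrow> (nat \<Rightarrow> real) \<Rightarrow> real" where
  "bnorm B Nb i t = sqrt (qform (B i) (Nb i) t)"

definition dnorm :: "(nat \<Rightarrow> nat \<Rightarrow> nat \<Rightarrow> real) \<Rightarrow> (nat \<Rightarrow> nat) \<Rightarrow> nat \<Rightarrow> (nat \<Rightarrow> real) \<Rightarrow> real" where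
  "dnorm Binv Nb i t = sqrt (qform (Binv i) (Nb i) t)"

definition econvex_on :: "(nat \<Rightarrow> real) set \<Rightarrow> ((nat \<Rightarrow> real) \<Rightarrow> ereal) \<Rightarrow> bool" where
  "econvex_on S g \<longleftrightarrow> (\<forall>x\<in>S. \<forall>y\<in>S. \<forall>u::real. 0 < u \<and> u < 1 \<longrightarrow>
      g (\<lambda>j. (1 - u) * x j + u * y j) \<le> ereal (1 - u) * g x + ereal u * g y)"

definition eproper_on :: "(nat \<Rightarrow> real) set \<Rightarrow> ((nat \<Rightarrow> real) \<Rightarrow> ereal) \<Rightarrow> bool" where
  "eproper_on S g \<longleftrightarrow> (\<forall>x\<in>S. g x \<noteq> -\<infinity>) \<and> (\<exists>x\<in>S. g x \<noteq> \<infinity>)"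

text \<open>closed = epigraph is closed (product topology on nat => real, which is the Euclidean
  topology on the finite-dimensional block space)\<close>
definition eclosed_on :: "(nat \<Rightarrow> real) set \<Rightarrow> ((nat \<Rightarrow> real) \<Rightarrow> ereal) \<Rightarrow> bool" where
  "eclosed_on S g \<longleftrightarrow> closed {(x, a::real). x \<in> S \<and> g x \<le> ereal a}"

definition Fobj :: "(real^'N::finite \<Rightarrow> real) \<Rightarrow> (nat \<Rightarrow> (nat \<Rightarrow> real) \<Rightarrow> ereal) \<Rightarrow>
    (nat \<Rightarrow> 'N) \<Rightarrow> (nat \<Rightarrow> nat) \<Rightarrow> nat \<Rightarrow> real^'N \<Rightarrow> ereal" where
  "Fobj f \<Psi> \<sigma> Nb n x = ereal (f x) + (\<Sum>i<n. \<Psi> i (blk \<sigma> Nb i x))"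

definition Lnorm_sq :: "(nat \<Rightarrow> real) \<Rightarrow> (nat \<Rightarrow> nat \<Rightarrow> nat \<Rightarrow> real) \<Rightarrow>
    (nat \<Rightarrow> 'N::finite) \<Rightarrow> (nat \<Rightarrow> nat) \<Rightarrow> nat \<Rightarrow> real^'N \<Rightarrow> real" where
  "Lnorm_sq L B \<sigma> Nb n x = (\<Sum>i<n. L i * (bnorm B Nb i (blk \<sigma> Nb i x))\<^sup>2)"

definition subgrad :: "(real^'N::finite \<Rightarrow> ereal) \<Rightarrow> real^'N \<Rightarrow> real^'N \<Rightarrow> bool" where
  "subgrad F y g \<longleftrightarrow> (\<forall>x. F y + ereal (inner g (x - y)) \<le> F x)"

definition Tblk :: "(real^'N::finite \<Rightarrow> real^'N) \<Rightarrow> (nat \<Rightarrow> real) \<Rightarrow> (nat \<Rightarrow> nat \<Rightarrow> nat \<Rightarrow> real) \<Rightarrow>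
    (nat \<Rightarrow> (nat \<Rightarrow> real) \<Rightarrow> ereal) \<Rightarrow> (nat \<Rightarrow> 'N) \<Rightarrow> (nat \<Rightarrow> nat) \<Rightarrow> nat \<Rightarrow> real^'N \<Rightarrow> (nat \<Rightarrow> real)" where
  "Tblk gf L B \<Psi> \<sigma> Nb i x =
     (let obj = (\<lambda>t. ereal ((\<Sum>j<Nb i. blk \<sigma> Nb i (gf x) j * t j) + L i / 2 * (bnorm B Nb i t)\<^sup>2)
                     + \<Psi> i (\<lambda>j. blk \<sigma> Nb i x j + t j))
      in SOME t. t \<in> bsub Nb i \<and> (\<forall>s\<in>bsub Nb i. obj t \<le> obj s))"

text \<open>x_k of UCDC(x0) when the chosen block indices are the list is (0-based, in order)\<close>
definition ucdc :: "(real^'N::finite \<Rightarrow> real^'N) \<Rightarrow> (nat \<Rightarrow> real) \<Rightarrow> (nat \<Rightarrow> nat \<Rightarrow> nat \<Rightarrow> real) \<Rightarrow>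
    (nat \<Rightarrow> (nat \<Rightarrow> real) \<Rightarrow> ereal) \<Rightarrow> (nat \<Rightarrow> 'N) \<Rightarrow> (nat \<Rightarrow> nat) \<Rightarrow> real^'N \<Rightarrow> nat list \<Rightarrow> real^'N" where
  "ucdc gf L B \<Psi> \<sigma> Nb x0 is = fold (\<lambda>i x. x + Uemb \<sigma> Nb i (Tblk gf L B \<Psi> \<sigma> Nb i x)) is x0"

text \<open>uniform i.i.d. choice of k block indices from {0..<n}\<close>
definition index_seqs :: "nat \<Rightarrow> nat \<Rightarrow> nat list set" where
  "index_seqs n k = {is. length is = k \<and> set is \<subseteq> {..<n}}"

definition gamma_mu :: "real \<Rightarrow> real" where
  "gamma_mu \<mu> = (if \<mu> \<le> 2 then 1 - \<mu> / 4 else 1 / \<mu>)"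

end

theory Submission
  imports Defs
begin

text \<open>Each step of UCDC minimises, over the chosen block, an upper model of \<open>F\<close> supplied by the
  block descent lemma; the model attains its minimum because \<open>\<Psi>\<^sub>i\<close> is closed and the quadratic
  term makes it coercive. Averaging over the \<open>n\<close> blocks, the expected value of \<open>F\<close> after one
  step is at most \<open>((n - 1) F(x) + f(x) + \<langle>\<nabla>f(x), y - x\<rangle> + \<parallel>y - x\<parallel>\<^sub>L\<^sup>2/2 + \<Psi>(y)) / n\<close> for
  every \<open>y\<close>. Taking \<open>y\<close> on the segment from \<open>x\<close> to a minimiser at step \<open>min 1 (\<mu>/2)\<close> and using
  strong convexity gives \<open>E[F(x\<^sub>k\<^sub>+\<^sub>1) - F\<^sup>*] \<le> (1 - (1 - \<gamma>\<^sub>\<mu>)/n) (F(x\<^sub>k) - F\<^sup>*)\<close>. Iterating over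
  the \<open>n\<^sup>k\<close> equally likely index sequences and applying Markov's inequality gives the claim.\<close>

section \<open>Block coordinates\<close>

lemma off_Suc: "off Nb (Suc i) = off Nb i + Nb i"
  by (simp add: off_def)

lemma off_mono: "i \<le> j \<Longrightarrow> off Nb i \<le> off Nb j"
  unfolding off_def by (rule sum_mono2) auto

lemma off_Suc_le: "i < j \<Longrightarrow> off Nb i + Nb i \<le> off Nb j"
  using off_mono[of "Suc i" j Nb] by (simp add: off_Suc)

lemma sum_lessThan_add_split: "(\<Sum>p<a + (b::nat). h p) = (\<Sum>p<a. h p) + (\<Sum>j<b. h (a + j))"
  by (induction b) (auto simp: add.assoc)

lemma sum_lessThan_off: "(\<Sum>p<off Nb m. h p) = (\<Sum>i<m. \<Sum>j<Nb i. h (off Nb i + j))"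
  by (induction m) (auto simp: off_Suc sum_lessThan_add_split off_def[of _ 0])

lemma bsub_add: "s \<in> bsub Nb i \<Longrightarrow> t \<in> bsub Nb i \<Longrightarrow> (\<lambda>j. s j + t j) \<in> bsub Nb i"
  by (auto simp: bsub_def)

locale block_partition =
  fixes \<sigma> :: "nat \<Rightarrow> 'N::finite" and Nb :: "nat \<Rightarrow> nat" and n :: nat
  assumes perm: "bij_betw \<sigma> {..<CARD('N)} UNIV"
    and blocks: "(\<Sum>i<n. Nb i) = CARD('N)"
begin

lemma n_pos: "0 < n"
  using blocks by (cases n) auto

lemma off_n: "off Nb n = CARD('N)"
  using blocks by (simp add: off_def)

lemma off_add_Nb_le: "i < n \<Longrightarrow> off Nb i + Nb i \<le> CARD('N)"
  using off_mono[of "Suc i" n Nb] off_n by (simp add: off_Suc)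

lemma Uemb_nth:
  assumes "p < CARD('N)"
  shows "Uemb \<sigma> Nb i t $ \<sigma> p = (if off Nb i \<le> p \<and> p < off Nb i + Nb i then t (p - off Nb i) else 0)"
proof -
  have "inv_into {..<CARD('N)} \<sigma> (\<sigma> p) = p"
    using perm assms by (simp add: bij_betw_def inv_into_f_f)
  then show ?thesis by (simp add: Uemb_def Let_def)
qed

lemma blk_Uemb_same: "i < n \<Longrightarrow> t \<in> bsub Nb i \<Longrightarrow> blk \<sigma> Nb i (Uemb \<sigma> Nb i t) = t"
  using off_add_Nb_le[of i] by (auto simp: fun_eq_iff blk_def bsub_def Uemb_nth)

lemma blk_Uemb_other:
  assumes "i < n" "j < n" "j \<noteq> i"
  shows "blk \<sigma> Nb j (Uemb \<sigma> Nb i t) = (\<lambda>_. 0)"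
proof
  fix a
  have "\<not> (off Nb i \<le> off Nb j + a \<and> off Nb j + a < off Nb i + Nb i)" if "a < Nb j"
    using assms that off_Suc_le[of i j Nb] off_Suc_le[of j i Nb] by (cases "i < j") auto
  then show "blk \<sigma> Nb j (Uemb \<sigma> Nb i t) a = 0"
    using off_add_Nb_le[OF assms(2)] by (auto simp: blk_def Uemb_nth)
qed

lemma blk_add: "blk \<sigma> Nb i (x + y) = (\<lambda>j. blk \<sigma> Nb i x j + blk \<sigma> Nb i y j)"
  by (auto simp: blk_def)

lemma blk_add_Uemb_same: "i < n \<Longrightarrow> t \<in> bsub Nb i \<Longrightarrow> blk \<sigma> Nb i (x + Uemb \<sigma> Nb i t) = (\<lambda>j. blk \<sigma> Nb i x j + t j)"
  by (simp add: blk_add blk_Uemb_same)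

lemma blk_add_Uemb_other: "i < n \<Longrightarrow> j < n \<Longrightarrow> j \<noteq> i \<Longrightarrow> blk \<sigma> Nb j (x + Uemb \<sigma> Nb i t) = blk \<sigma> Nb j x"
  by (simp add: blk_add blk_Uemb_other)

lemma sum_UNIV_reindex: "(\<Sum>c\<in>UNIV. h c) = (\<Sum>p<CARD('N). h (\<sigma> p))"
  using sum.reindex_bij_betw[OF perm, of h] by simp

lemma inner_eq_sum_blocks: "inner g d = (\<Sum>i<n. \<Sum>j<Nb i. blk \<sigma> Nb i g j * blk \<sigma> Nb i d j)"
proof -
  have "inner g d = (\<Sum>p<off Nb n. g $ \<sigma> p * d $ \<sigma> p)"
    by (simp add: inner_vec_def sum_UNIV_reindex off_n)
  also have "\<dots> = (\<Sum>i<n. \<Sum>j<Nb i. blk \<sigma> Nb i g j * blk \<sigma> Nb i d j)"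
    unfolding sum_lessThan_off by (intro sum.cong refl) (auto simp: blk_def)
  finally show ?thesis .
qed

lemma inner_Uemb: "i < n \<Longrightarrow> t \<in> bsub Nb i \<Longrightarrow> inner g (Uemb \<sigma> Nb i t) = (\<Sum>j<Nb i. blk \<sigma> Nb i g j * t j)"
  by (simp add: inner_eq_sum_blocks[of g] blk_Uemb_other blk_Uemb_same
      sum.remove[of "{..<n}" i] sum.neutral)

end

section \<open>Positive definite quadratic forms\<close>

definition bform :: "(nat \<Rightarrow> nat \<Rightarrow> real) \<Rightarrow> nat \<Rightarrow> (nat \<Rightarrow> real) \<Rightarrow> (nat \<Rightarrow> real) \<Rightarrow> real" where
  "bform M m u t = (\<Sum>j<m. \<Sum>l<m. M j l * u l * t j)"

lemma qform_eq_bform: "qform M m t = bform M m t t"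
  by (simp add: qform_def bform_def)

lemma qform_nonneg: "pos_def_mat M m \<Longrightarrow> 0 \<le> qform M m t"
  by (cases "\<exists>j<m. t j \<noteq> 0") (auto simp: pos_def_mat_def qform_def intro: less_imp_le)

lemma qform_scale: "qform M m (\<lambda>j. c * t j) = c\<^sup>2 * qform M m t"
  by (simp add: qform_def sum_distrib_left power2_eq_square algebra_simps)

lemma bform_commute: "\<forall>j<m. \<forall>l<m. M j l = M l j \<Longrightarrow> bform M m u t = bform M m t u"
  unfolding bform_def by (subst sum.swap) (auto intro!: sum.cong simp: mult_ac)

lemma qform_scale_diff:
  assumes "\<forall>j<m. \<forall>l<m. M j l = M l j"
  shows "qform M m (\<lambda>l. a * u l - t l) = a\<^sup>2 * qform M m u - 2 * a * bform M m u t + qform M m t"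
proof -
  have "qform M m (\<lambda>l. a * u l - t l)
      = a\<^sup>2 * bform M m u u - a * bform M m u t - a * bform M m t u + bform M m t t"
    by (simp add: qform_def bform_def sum.distrib sum_subtractf sum_distrib_left
        algebra_simps power2_eq_square)
  then show ?thesis
    using bform_commute[OF assms, of u t] by (simp add: qform_eq_bform)
qed

lemma le_sqrt_mult_sqrt_if_quadratic_bound:
  fixes A b C :: real
  assumes quadratic: "\<And>a. 2 * a * b \<le> a\<^sup>2 * A + C" and "0 \<le> A"
  shows "b \<le> sqrt A * sqrt C"
proof (cases "A = 0")
  case True
  have "0 \<le> C" using quadratic[of 0] by simp
  have "\<not> 0 < b"
  proof
    assume "0 < b"
    then have "2 * ((C + 1) / b) * b = 2 * (C + 1)" by simp
    then show False using quadratic[of "(C + 1) / b"] True \<open>0 \<le> C\<close> by simp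
  qed
  then show ?thesis using True by simp
next
  case False
  then have "0 < A" using assms(2) by simp
  have "2 * (b / A) * b \<le> (b / A)\<^sup>2 * A + C" by (rule quadratic)
  then have "b\<^sup>2 \<le> A * C" using \<open>0 < A\<close> by (simp add: field_simps power2_eq_square)
  then have "\<bar>b\<bar> \<le> sqrt (A * C)" using real_le_rsqrt by simp
  then show ?thesis by (simp add: real_sqrt_mult)
qed

lemma bform_le_sqrt_qform:
  assumes "pos_def_mat M m"
  shows "bform M m u t \<le> sqrt (qform M m u) * sqrt (qform M m t)"
proof (rule le_sqrt_mult_sqrt_if_quadratic_bound)
  fix a
  have "0 \<le> qform M m (\<lambda>l. a * u l - t l)" using qform_nonneg[OF assms] .
  then show "2 * a * bform M m u t \<le> a\<^sup>2 * qform M m u + qform M m t"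
    using qform_scale_diff[of m M a u t] assms by (simp add: pos_def_mat_def)
qed (rule qform_nonneg[OF assms])

text \<open>The dual quadratic form is the primal one evaluated at \<open>u = M\<^sup>-\<^sup>1 d\<close>, and
  \<open>\<langle>d, t\<rangle> = \<langle>M u, t\<rangle>\<close>.\<close>

lemma is_inv_mat_apply:
  assumes "is_inv_mat M Mi m" "j < m"
  shows "(\<Sum>l<m. M j l * (\<Sum>p<m. Mi l p * d p)) = d j"
proof -
  have "(\<Sum>l<m. M j l * (\<Sum>p<m. Mi l p * d p)) = (\<Sum>p<m. (\<Sum>l<m. M j l * Mi l p) * d p)"
    by (simp add: sum_distrib_left sum_distrib_right mult.assoc) (rule sum.swap)
  also have "\<dots> = (\<Sum>p<m. if j = p then d p else 0)"
    using assms by (intro sum.cong) (auto simp: is_inv_mat_def)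
  finally show ?thesis using assms(2) by simp
qed

lemma qform_inv_mat:
  assumes "is_inv_mat M Mi m"
  shows "qform Mi m d = qform M m (\<lambda>l. \<Sum>p<m. Mi l p * d p)"
proof -
  have "qform Mi m d = (\<Sum>j<m. d j * (\<Sum>p<m. Mi j p * d p))"
    unfolding qform_def by (intro sum.cong refl) (simp add: sum_distrib_left mult_ac)
  also have "\<dots> = qform M m (\<lambda>l. \<Sum>p<m. Mi l p * d p)"
    unfolding qform_def using is_inv_mat_apply[OF assms]
    by (intro sum.cong refl) (simp add: sum_distrib_right[symmetric])
  finally show ?thesis .
qed

lemma qform_inv_mat_nonneg: "pos_def_mat M m \<Longrightarrow> is_inv_mat M Mi m \<Longrightarrow> 0 \<le> qform Mi m d"
  by (simp add: qform_inv_mat qform_nonneg)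

lemma dual_cauchy_schwarz:
  assumes "pos_def_mat M m" "is_inv_mat M Mi m"
  shows "(\<Sum>j<m. d j * t j) \<le> sqrt (qform Mi m d) * sqrt (qform M m t)"
proof -
  define u where "u = (\<lambda>l. \<Sum>p<m. Mi l p * d p)"
  have "(\<Sum>j<m. d j * t j) = bform M m u t"
    unfolding bform_def u_def using is_inv_mat_apply[OF assms(2)]
    by (intro sum.cong refl) (simp add: sum_distrib_right[symmetric])
  then show ?thesis
    using bform_le_sqrt_qform[OF assms(1), of u t] qform_inv_mat[OF assms(2)] by (simp add: u_def)
qed

section \<open>Block-smooth convex functions\<close>

lemma bnorm_scale: "bnorm B Nb i (\<lambda>j. c * t j) = \<bar>c\<bar> * bnorm B Nb i t"
  by (simp add: bnorm_def qform_scale real_sqrt_mult)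

lemma bnorm_uminus: "bnorm B Nb i (\<lambda>j. - t j) = bnorm B Nb i t"
  using bnorm_scale[of B Nb i "-1" t] by simp

lemma blk_scaleR: "blk \<sigma> Nb i (c *\<^sub>R x) = (\<lambda>j. c * blk \<sigma> Nb i x j)"
  by (auto simp: blk_def)

lemma Lnorm_sq_scaleR: "Lnorm_sq L B \<sigma> Nb n (c *\<^sub>R v) = c\<^sup>2 * Lnorm_sq L B \<sigma> Nb n v"
  by (simp add: Lnorm_sq_def blk_scaleR bnorm_scale power_mult_distrib sum_distrib_left mult_ac)

lemma one_minus_gamma_mu_eq:
  assumes "0 < \<mu>"
  shows "1 - gamma_mu \<mu> = min 1 (\<mu> / 2) - (min 1 (\<mu> / 2))\<^sup>2 / \<mu>"
  using assms by (auto simp: gamma_mu_def power2_eq_square field_simps)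

lemma one_minus_gamma_mu_bounds: "0 < \<mu> \<Longrightarrow> 0 < 1 - gamma_mu \<mu> \<and> 1 - gamma_mu \<mu> \<le> 1"
  by (auto simp: gamma_mu_def field_simps)

locale block_problem = block_partition \<sigma> Nb n for \<sigma> :: "nat \<Rightarrow> 'N::finite" and Nb n +
  fixes f :: "real^'N \<Rightarrow> real" and gf :: "real^'N \<Rightarrow> real^'N"
    and B Binv :: "nat \<Rightarrow> nat \<Rightarrow> nat \<Rightarrow> real" and L :: "nat \<Rightarrow> real"
    and \<Psi> :: "nat \<Rightarrow> (nat \<Rightarrow> real) \<Rightarrow> ereal"
  assumes Bpd: "\<forall>i<n. pos_def_mat (B i) (Nb i)"
    and Binv: "\<forall>i<n. is_inv_mat (B i) (Binv i) (Nb i)"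
    and f_convex: "convex_on UNIV f"
    and f_grad: "\<forall>x. (f has_derivative (\<lambda>h. inner (gf x) h)) (at x)"
    and L_pos: "\<forall>i<n. 0 < L i"
    and lipschitz: "\<forall>x i t. i < n \<longrightarrow> t \<in> bsub Nb i \<longrightarrow>
          dnorm Binv Nb i (\<lambda>j. blk \<sigma> Nb i (gf (x + Uemb \<sigma> Nb i t)) j - blk \<sigma> Nb i (gf x) j)
            \<le> L i * bnorm B Nb i t"
    and Psi: "\<forall>i<n. eproper_on (bsub Nb i) (\<Psi> i) \<and> eclosed_on (bsub Nb i) (\<Psi> i)
                    \<and> econvex_on (bsub Nb i) (\<Psi> i)"
begin

lemma bnorm_sq: "i < n \<Longrightarrow> (bnorm B Nb i t)\<^sup>2 = qform (B i) (Nb i) t"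
  using Bpd by (simp add: bnorm_def qform_nonneg)

lemma bnorm_nonneg: "i < n \<Longrightarrow> 0 \<le> bnorm B Nb i t"
  using Bpd by (simp add: bnorm_def qform_nonneg)

lemma dnorm_nonneg: "i < n \<Longrightarrow> 0 \<le> dnorm Binv Nb i d"
  using Bpd Binv qform_inv_mat_nonneg[of "B i" "Nb i" "Binv i" d] by (simp add: dnorm_def)

lemma Psi_convex:
  assumes "i < n" "s \<in> bsub Nb i" "t \<in> bsub Nb i" "0 < u" "u < 1"
  shows "\<Psi> i (\<lambda>j. (1 - u) * s j + u * t j) \<le> ereal (1 - u) * \<Psi> i s + ereal u * \<Psi> i t"
  using Psi assms unfolding econvex_on_def by blast

lemma block_cauchy_schwarz:
  assumes "i < n"
  shows "\<bar>\<Sum>j<Nb i. d j * t j\<bar> \<le> dnorm Binv Nb i d * bnorm B Nb i t"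
proof -
  have "(\<Sum>j<Nb i. d j * t j) \<le> dnorm Binv Nb i d * bnorm B Nb i t" for t
    using dual_cauchy_schwarz[of "B i" "Nb i" "Binv i" d t] assms Bpd Binv
    by (simp add: dnorm_def bnorm_def)
  from this[of t] this[of "\<lambda>j. - t j"] show ?thesis
    by (simp add: bnorm_uminus sum_negf)
qed

lemma has_real_derivative_along_line:
  "((\<lambda>s. f (x + s *\<^sub>R v)) has_real_derivative inner (gf (x + s *\<^sub>R v)) v) (at s)"
proof -
  have "((\<lambda>s. f (x + s *\<^sub>R v)) has_derivative (\<lambda>h. inner (gf (x + s *\<^sub>R v)) (h *\<^sub>R v))) (at s)"
  proof (rule has_derivative_compose[of "\<lambda>s. x + s *\<^sub>R v"])
    show "((\<lambda>s. x + s *\<^sub>R v) has_derivative (\<lambda>h. h *\<^sub>R v)) (at s)"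
      by (auto intro!: derivative_eq_intros)
  qed (use f_grad in blast)
  moreover have "(\<lambda>h. inner (gf (x + s *\<^sub>R v)) (h *\<^sub>R v)) = (*) (inner (gf (x + s *\<^sub>R v)) v)"
    by (simp add: fun_eq_iff mult.commute)
  ultimately show ?thesis
    by (simp add: has_field_derivative_def)
qed

lemma gradient_inequality: "f x + inner (gf x) (y - x) \<le> f y"
proof -
  define \<psi> where "\<psi> = (\<lambda>s::real. f (x + s *\<^sub>R (y - x)))"
  have "convex_on UNIV \<psi>"
  proof (rule convex_onI)
    fix t a b :: real assume "0 < t" "t < 1"
    have "\<psi> ((1 - t) *\<^sub>R a + t *\<^sub>R b) = f ((1 - t) *\<^sub>R (x + a *\<^sub>R (y - x)) + t *\<^sub>R (x + b *\<^sub>R (y - x)))"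
      unfolding \<psi>_def by (simp add: algebra_simps)
    also have "\<dots> \<le> (1 - t) * \<psi> a + t * \<psi> b"
      unfolding \<psi>_def using convex_onD[OF f_convex, of t] \<open>0 < t\<close> \<open>t < 1\<close> by simp
    finally show "\<psi> ((1 - t) *\<^sub>R a + t *\<^sub>R b) \<le> (1 - t) * \<psi> a + t * \<psi> b" .
  qed simp
  moreover have "(\<psi> has_real_derivative inner (gf x) (y - x)) (at 0 within UNIV)"
    using has_real_derivative_along_line[of x "y - x" 0] by (simp add: \<psi>_def)
  ultimately have "inner (gf x) (y - x) * (1 - 0) \<le> \<psi> 1 - \<psi> 0"
    by (intro convex_on_imp_above_tangent) auto
  then show ?thesis by (simp add: \<psi>_def)
qed

text \<open>By the block Lipschitz condition and Cauchy-Schwarz, the gap between the two sides, taken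
  along \<open>s \<mapsto> x + s U\<^sub>i t\<close>, has nonpositive derivative on \<open>[0, 1]\<close>.\<close>

lemma block_descent:
  assumes i: "i < n" and t: "t \<in> bsub Nb i"
  shows "f (x + Uemb \<sigma> Nb i t) \<le> f x + (\<Sum>j<Nb i. blk \<sigma> Nb i (gf x) j * t j) + L i / 2 * (bnorm B Nb i t)\<^sup>2"
proof -
  define v where "v = Uemb \<sigma> Nb i t"
  define Q where "Q = (bnorm B Nb i t)\<^sup>2"
  define G0 where "G0 = inner (gf x) v"
  define \<phi> where "\<phi> = (\<lambda>s. f (x + s *\<^sub>R v) - s * G0 - L i / 2 * s\<^sup>2 * Q)"
  have "\<phi> 1 \<le> \<phi> 0"
  proof (rule DERIV_nonpos_imp_nonincreasing[of 0 1])
    fix s :: real assume s: "0 \<le> s" "s \<le> 1"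
    have der: "(\<phi> has_real_derivative (inner (gf (x + s *\<^sub>R v)) v - G0 - L i * s * Q)) (at s)"
      unfolding \<phi>_def
      by (auto intro!: derivative_eq_intros has_real_derivative_along_line simp: power2_eq_square)
    define w where "w = (\<lambda>j. s * t j)"
    have w: "w \<in> bsub Nb i" using t by (auto simp: bsub_def w_def)
    have xw: "x + s *\<^sub>R v = x + Uemb \<sigma> Nb i w"
      by (simp add: v_def w_def Uemb_def vec_eq_iff Let_def)
    have "inner (gf (x + s *\<^sub>R v)) v - G0 =
        (\<Sum>j<Nb i. (blk \<sigma> Nb i (gf (x + Uemb \<sigma> Nb i w)) j - blk \<sigma> Nb i (gf x) j) * t j)"
      unfolding G0_def xw using i t w by (simp add: v_def inner_Uemb sum_subtractf left_diff_distrib)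
    also have "\<dots> \<le> dnorm Binv Nb i (\<lambda>j. blk \<sigma> Nb i (gf (x + Uemb \<sigma> Nb i w)) j - blk \<sigma> Nb i (gf x) j)
                    * bnorm B Nb i t"
      using block_cauchy_schwarz[OF i] by (rule abs_le_D1)
    also have "\<dots> \<le> L i * bnorm B Nb i w * bnorm B Nb i t"
      using lipschitz i w by (intro mult_right_mono bnorm_nonneg) auto
    also have "\<dots> = L i * s * Q"
      using s by (simp add: w_def bnorm_scale Q_def power2_eq_square)
    finally show "\<exists>y. (\<phi> has_real_derivative y) (at s) \<and> y \<le> 0" using der by auto
  qed simp
  then show ?thesis
    using i t by (simp add: \<phi>_def v_def G0_def Q_def inner_Uemb)
qed

end

section \<open>Uniformly random index sequences\<close>

lemma index_seqs_Suc: "index_seqs n (Suc k) = (\<lambda>(js, i). js @ [i]) ` (index_seqs n k \<times> {..<n})"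
proof
  show "index_seqs n (Suc k) \<subseteq> (\<lambda>(js, i). js @ [i]) ` (index_seqs n k \<times> {..<n})"
  proof
    fix ks assume ks: "ks \<in> index_seqs n (Suc k)"
    then have "ks \<noteq> []" by (auto simp: index_seqs_def)
    then obtain js i where "ks = js @ [i]" by (cases ks rule: rev_exhaust) auto
    with ks show "ks \<in> (\<lambda>(js, i). js @ [i]) ` (index_seqs n k \<times> {..<n})"
      by (auto simp: index_seqs_def image_iff)
  qed
qed (auto simp: index_seqs_def)

lemma index_seqs_eq_lists: "index_seqs n k = {xs. set xs \<subseteq> {..<n} \<and> length xs = k}"
  by (auto simp: index_seqs_def)

lemma finite_index_seqs: "finite (index_seqs n k)"
  by (simp add: index_seqs_eq_lists finite_lists_length_eq)

lemma card_index_seqs: "card (index_seqs n k) = n ^ k"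
  by (simp add: index_seqs_eq_lists card_lists_length_eq)

lemma index_seqs_nonempty: "0 < n \<Longrightarrow> index_seqs n k \<noteq> {}"
  by (auto simp: index_seqs_def intro!: exI[of _ "replicate k 0"])

lemma sum_index_seqs_fold_le:
  fixes step :: "nat \<Rightarrow> 'a \<Rightarrow> 'a" and V :: "'a \<Rightarrow> real"
  assumes step_invariant: "\<And>i x. i < n \<Longrightarrow> P x \<Longrightarrow> P (step i x)" and "P x0"
    and contraction: "\<And>x. P x \<Longrightarrow> (\<Sum>i<n. V (step i x)) \<le> q * V x" and "0 \<le> q"
  shows "(\<Sum>js\<in>index_seqs n k. V (fold step js x0)) \<le> q ^ k * V x0"
proof (induction k)
  case 0
  have "index_seqs n 0 = {[]}" by (auto simp: index_seqs_def)
  then show ?case by simp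
next
  case (Suc k)
  have "(\<Sum>js\<in>index_seqs n (Suc k). V (fold step js x0))
      = (\<Sum>js\<in>index_seqs n k. \<Sum>i<n. V (step i (fold step js x0)))"
  proof -
    have "inj_on (\<lambda>(js, i). js @ [i]) (index_seqs n k \<times> {..<n})" by (auto simp: inj_on_def)
    then show ?thesis
      unfolding index_seqs_Suc by (simp add: sum.reindex sum.cartesian_product')
  qed
  also have "\<dots> \<le> (\<Sum>js\<in>index_seqs n k. q * V (fold step js x0))"
  proof (rule sum_mono)
    fix js assume "js \<in> index_seqs n k"
    then have "\<And>i. i \<in> set js \<Longrightarrow> i < n" by (auto simp: index_seqs_def)
    then have "P (fold step js x0)"
      using fold_invariant[of js "\<lambda>i. i < n" P x0 step] \<open>P x0\<close> step_invariant by simp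
    then show "(\<Sum>i<n. V (step i (fold step js x0))) \<le> q * V (fold step js x0)"
      by (rule contraction)
  qed
  also have "\<dots> = q * (\<Sum>js\<in>index_seqs n k. V (fold step js x0))"
    by (rule sum_distrib_left[symmetric])
  also have "\<dots> \<le> q * (q ^ k * V x0)"
    using Suc.IH \<open>0 \<le> q\<close> by (rule mult_left_mono)
  finally show ?case by simp
qed

lemma markov_pmf_of_set:
  fixes G :: "'a \<Rightarrow> real"
  assumes A: "finite A" "A \<noteq> {}" and G: "\<And>a. a \<in> A \<Longrightarrow> 0 \<le> G a" and \<epsilon>: "0 < \<epsilon>"
    and E: "\<And>a. a \<in> A \<Longrightarrow> G a \<le> \<epsilon> \<Longrightarrow> a \<in> E"
  shows "measure_pmf.prob (pmf_of_set A) E \<ge> 1 - (\<Sum>a\<in>A. G a) / (\<epsilon> * card A)"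
proof -
  define Bad where "Bad = {a\<in>A. \<epsilon> < G a}"
  have Bad: "finite Bad" "Bad \<subseteq> A" using A by (auto simp: Bad_def)
  have "\<epsilon> * card Bad = (\<Sum>a\<in>Bad. \<epsilon>)" by simp
  also have "\<dots> \<le> (\<Sum>a\<in>Bad. G a)" by (intro sum_mono) (auto simp: Bad_def)
  also have "\<dots> \<le> (\<Sum>a\<in>A. G a)" using A Bad G by (intro sum_mono2) auto
  finally have "\<epsilon> * card Bad / (\<epsilon> * card A) \<le> (\<Sum>a\<in>A. G a) / (\<epsilon> * card A)"
    by (rule divide_right_mono) (use \<epsilon> in auto)
  then have card_Bad: "card Bad / card A \<le> (\<Sum>a\<in>A. G a) / (\<epsilon> * card A)"
    using \<epsilon> by simp
  have "A - Bad \<subseteq> A \<inter> E"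
  proof
    fix a assume "a \<in> A - Bad"
    then show "a \<in> A \<inter> E" using E[of a] by (auto simp: Bad_def not_less)
  qed
  then have "card (A - Bad) \<le> card (A \<inter> E)"
    using A by (intro card_mono) auto
  moreover have "card (A - Bad) = card A - card Bad" using Bad by (rule card_Diff_subset)
  moreover have "card Bad \<le> card A" using A Bad by (intro card_mono)
  ultimately have "real (card A) - card Bad \<le> card (A \<inter> E)" by linarith
  then have "(real (card A) - card Bad) / card A \<le> card (A \<inter> E) / card A"
    by (rule divide_right_mono) simp
  moreover have "(real (card A) - card Bad) / card A = 1 - card Bad / card A"
    using A by (simp add: diff_divide_distrib)
  ultimately show ?thesis
    using card_Bad by (simp add: measure_pmf_of_set[OF A(2,1)])
qed

lemma power_decay_le:
  fixes m c G0 r :: real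
  assumes c: "0 < c" "c \<le> m" and G0: "0 \<le> G0" and r: "0 < r"
    and k: "m / c * ln (G0 / r) \<le> real k"
  shows "(m - c) ^ k * G0 \<le> r * m ^ k"
proof (cases "G0 \<le> r")
  case True
  have "(m - c) ^ k \<le> m ^ k" using c by (intro power_mono) auto
  then have "(m - c) ^ k * G0 \<le> m ^ k * r" using True G0 c by (intro mult_mono) auto
  then show ?thesis by (simp add: mult.commute)
next
  case False
  then have "0 < G0" using r by auto
  have m: "0 < m" using c by simp
  have "(m - c) / m \<le> exp (- (c / m))"
    using exp_ge_add_one_self[of "- (c / m)"] m by (simp add: diff_divide_distrib)
  then have "((m - c) / m) ^ k \<le> exp (- (c / m)) ^ k"
    using c m by (intro power_mono) auto
  also have "\<dots> = exp (- (c / m * real k))"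
    by (simp add: exp_of_nat_mult[symmetric] mult.commute)
  also have "\<dots> \<le> exp (- ln (G0 / r))"
    using k c m by (simp add: field_simps)
  also have "\<dots> = r / G0"
    using \<open>0 < G0\<close> r by (simp add: exp_minus)
  finally show ?thesis
    using \<open>0 < G0\<close> m by (simp add: power_divide field_simps)
qed

section \<open>The block model and its minimiser\<close>

lemma bsub_bounded_convergent_subseq:
  fixes ts :: "nat \<Rightarrow> nat \<Rightarrow> real"
  assumes ts: "\<And>k. ts k \<in> bsub Nb i" and bounded: "\<And>k j. \<bar>ts k j\<bar> \<le> M"
  obtains t r where "t \<in> bsub Nb i" "strict_mono r" "(ts \<circ> r) \<longlonglongrightarrow> t"
proof -
  define S where "S = (\<lambda>j. if j < Nb i then {-M..M} else {0::real})"
  have "compactin (product_topology (\<lambda>_. euclidean) UNIV) (PiE UNIV S)"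
    by (simp add: compactin_PiE S_def)
  then have "seq_compact (PiE UNIV S)"
    by (simp add: euclidean_product_topology compact_imp_seq_compact)
  moreover have "ts k \<in> PiE UNIV S" for k
  proof -
    have "ts k j \<in> S j" for j
      using ts[of k] bounded[of k j] by (auto simp: S_def bsub_def abs_le_iff)
    then show ?thesis by (simp add: PiE_UNIV_domain)
  qed
  ultimately obtain t r where "t \<in> PiE UNIV S" "strict_mono r" "(ts \<circ> r) \<longlonglongrightarrow> t"
    using seq_compactE[of "PiE UNIV S" ts] by blast
  moreover have "t \<in> bsub Nb i"
  proof -
    have t: "t j \<in> S j" for j using \<open>t \<in> PiE UNIV S\<close> by (simp add: PiE_UNIV_domain Pi_iff)
    show ?thesis unfolding bsub_def mem_Collect_eq
    proof (intro allI impI)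
      fix j assume "Nb i \<le> j"
      then show "t j = 0" using t[of j] by (simp add: S_def)
    qed
  qed
  ultimately show thesis using that by blast
qed

lemma tendsto_coordinate: "(f \<longlongrightarrow> l) F \<Longrightarrow> ((\<lambda>x. f x j :: real) \<longlongrightarrow> l j) F"
  using continuous_on_tendsto_compose[OF continuous_on_product_coordinates[of j]] by auto

lemma tendsto_shift_coordinates:
  "(f \<longlongrightarrow> l) F \<Longrightarrow> ((\<lambda>x. (\<lambda>j. z j + f x j :: real)) \<longlongrightarrow> (\<lambda>j. z j + l j)) F"
proof (rule continuous_on_tendsto_compose[of UNIV "\<lambda>y j. z j + y j"])
  show "continuous_on UNIV (\<lambda>y j. z j + y j)"
    by (intro continuous_on_coordinatewise_then_product continuous_on_add
        continuous_on_const continuous_on_product_coordinates)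
qed auto

locale block_problem_min = block_problem \<sigma> Nb n f gf B Binv L \<Psi>
  for \<sigma> :: "nat \<Rightarrow> 'N::finite" and Nb n f gf B Binv L \<Psi> +
  fixes xs :: "real^'N"
  assumes xs_min: "\<forall>x. Fobj f \<Psi> \<sigma> Nb n xs \<le> Fobj f \<Psi> \<sigma> Nb n x"
    and xs_finite: "Fobj f \<Psi> \<sigma> Nb n xs \<noteq> \<infinity>"
begin

abbreviation F :: "real^'N \<Rightarrow> ereal" where
  "F \<equiv> Fobj f \<Psi> \<sigma> Nb n"

text \<open>Real values of \<open>\<Psi>\<^sub>i(x\<^sup>(\<^sup>i\<^sup>))\<close> and of \<open>F\<close>, meaningful only where \<open>F x \<noteq> \<infinity>\<close>
  (\<open>real_of_ereal\<close> sends \<open>\<plusminus>\<infinity>\<close> to \<open>0\<close>).\<close>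

definition psi :: "nat \<Rightarrow> real^'N \<Rightarrow> real" where
  "psi i x = real_of_ereal (\<Psi> i (blk \<sigma> Nb i x))"

definition Fval :: "real^'N \<Rightarrow> real" where
  "Fval x = f x + (\<Sum>i<n. psi i x)"

definition Fstar :: real where
  "Fstar = Fval xs"

definition block_model :: "nat \<Rightarrow> real^'N \<Rightarrow> (nat \<Rightarrow> real) \<Rightarrow> ereal" where
  "block_model i x t = ereal ((\<Sum>j<Nb i. blk \<sigma> Nb i (gf x) j * t j) + L i / 2 * (bnorm B Nb i t)\<^sup>2)
                     + \<Psi> i (\<lambda>j. blk \<sigma> Nb i x j + t j)"

lemma Tblk_eq_block_model_argmin:
  "Tblk gf L B \<Psi> \<sigma> Nb i x = (SOME t. t \<in> bsub Nb i \<and> (\<forall>s\<in>bsub Nb i. block_model i x t \<le> block_model i x s))"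
  by (simp add: Tblk_def block_model_def Let_def)

lemma Psi_neq_minf: "i < n \<Longrightarrow> t \<in> bsub Nb i \<Longrightarrow> \<Psi> i t \<noteq> -\<infinity>"
  using Psi by (auto simp: eproper_on_def)

lemma Psi_blk_eq_psi:
  assumes "F x \<noteq> \<infinity>" "i < n"
  shows "\<Psi> i (blk \<sigma> Nb i x) = ereal (psi i x)"
proof -
  have "(\<Sum>j<n. \<Psi> j (blk \<sigma> Nb j x)) \<noteq> \<infinity>" using assms(1) by (auto simp: Fobj_def)
  then have "\<Psi> i (blk \<sigma> Nb i x) \<noteq> \<infinity>" using assms(2) sum_Pinfty by blast
  moreover have "\<Psi> i (blk \<sigma> Nb i x) \<noteq> -\<infinity>"
    using Psi_neq_minf assms(2) by (simp add: blk_def bsub_def)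
  ultimately show ?thesis by (cases "\<Psi> i (blk \<sigma> Nb i x)") (auto simp: psi_def)
qed

lemma F_eq_Fval: "F x \<noteq> \<infinity> \<Longrightarrow> F x = ereal (Fval x)"
  by (simp add: Fobj_def Fval_def Psi_blk_eq_psi)

lemma Fstar_le_F: "ereal Fstar \<le> F x"
  using xs_min F_eq_Fval[OF xs_finite] by (simp add: Fstar_def)

lemma Fstar_le_Fval: "F x \<noteq> \<infinity> \<Longrightarrow> Fstar \<le> Fval x"
  using Fstar_le_F[of x] by (simp add: F_eq_Fval)

lemma INF_F_eq_Fstar: "(INF x. F x) = ereal Fstar"
  using Fstar_le_F F_eq_Fval[OF xs_finite]
  by (intro antisym INF_greatest) (auto simp: Fstar_def intro: INF_lower2[of xs])

text \<open>Changing block \<open>i\<close> only changes \<open>f\<close> and \<open>\<Psi>\<^sub>i\<close>; the block model is the descent lemma's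
  upper bound on that change.\<close>

lemma F_block_update_le:
  assumes x: "F x \<noteq> \<infinity>" and i: "i < n" and s: "s \<in> bsub Nb i"
  shows "F (x + Uemb \<sigma> Nb i s) \<le> ereal (Fval x - psi i x) + block_model i x s"
proof -
  let ?y = "x + Uemb \<sigma> Nb i s"
  have "(\<Sum>j<n. \<Psi> j (blk \<sigma> Nb j ?y))
      = \<Psi> i (blk \<sigma> Nb i ?y) + (\<Sum>j\<in>{..<n}-{i}. \<Psi> j (blk \<sigma> Nb j ?y))"
    using i by (subst sum.remove[of _ i]) auto
  also have "(\<Sum>j\<in>{..<n}-{i}. \<Psi> j (blk \<sigma> Nb j ?y)) = ereal (\<Sum>j\<in>{..<n}-{i}. psi j x)"
    using i Psi_blk_eq_psi[OF x] by (simp add: blk_add_Uemb_other)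
  also have "(\<Sum>j\<in>{..<n}-{i}. psi j x) = (\<Sum>j<n. psi j x) - psi i x"
    using i by (simp add: sum_diff1)
  finally have "F ?y = ereal (f ?y + (\<Sum>j<n. psi j x) - psi i x) + \<Psi> i (\<lambda>j. blk \<sigma> Nb i x j + s j)"
    by (cases "\<Psi> i (\<lambda>j. blk \<sigma> Nb i x j + s j)") (simp_all add: Fobj_def blk_add_Uemb_same[OF i s])
  also have "\<dots> \<le> ereal (Fval x - psi i x) + block_model i x s"
    unfolding block_model_def add.assoc[symmetric]
  proof (rule add_right_mono)
    show "ereal (f ?y + (\<Sum>j<n. psi j x) - psi i x) \<le> ereal (Fval x - psi i x)
        + ereal ((\<Sum>j<Nb i. blk \<sigma> Nb i (gf x) j * s j) + L i / 2 * (bnorm B Nb i s)\<^sup>2)"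
    proof -
      have "f ?y + (\<Sum>j<n. psi j x) - psi i x \<le> Fval x - psi i x
          + ((\<Sum>j<Nb i. blk \<sigma> Nb i (gf x) j * s j) + L i / 2 * (bnorm B Nb i s)\<^sup>2)"
        using block_descent[OF i s, of x] unfolding Fval_def by linarith
      then show ?thesis by simp
    qed
  qed
  finally show ?thesis .
qed

lemma block_model_zero: "F x \<noteq> \<infinity> \<Longrightarrow> i < n \<Longrightarrow> block_model i x (\<lambda>_. 0) = ereal (psi i x)"
  using Psi_blk_eq_psi[of x i] by (simp add: block_model_def bnorm_def qform_def)

lemma block_model_lower_bound:
  assumes x: "F x \<noteq> \<infinity>" and i: "i < n" and s: "s \<in> bsub Nb i"
  shows "ereal (Fstar - Fval x + psi i x) \<le> block_model i x s"
proof -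
  have "ereal Fstar \<le> ereal (Fval x - psi i x) + block_model i x s"
    using Fstar_le_F F_block_update_le[OF x i s] by (rule order_trans)
  then show ?thesis by (cases "block_model i x s") auto
qed

text \<open>Convexity of \<open>\<Psi>\<^sub>i\<close> along the ray from \<open>x\<^sup>(\<^sup>i\<^sup>)\<close> through \<open>x\<^sup>(\<^sup>i\<^sup>) + s\<close>, together with the
  lower bound of the block model at the unit vector \<open>s / \<parallel>s\<parallel>\<close>, bounds \<open>\<Psi>\<^sub>i\<close> from below by an affine
  function of \<open>\<parallel>s\<parallel>\<close>.\<close>

lemma Psi_ray_lower_bound:
  assumes x: "F x \<noteq> \<infinity>" and i: "i < n" and s: "s \<in> bsub Nb i" and \<tau>: "1 < bnorm B Nb i s"
    and q: "\<Psi> i (\<lambda>j. blk \<sigma> Nb i x j + s j) = ereal q"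
  shows "psi i x + bnorm B Nb i s * (Fstar - Fval x - dnorm Binv Nb i (blk \<sigma> Nb i (gf x)) - L i / 2) \<le> q"
proof -
  define \<tau> where "\<tau> = bnorm B Nb i s"
  define u where "u = 1 / \<tau>"
  define z where "z = blk \<sigma> Nb i x"
  define g where "g = blk \<sigma> Nb i (gf x)"
  define d where "d = (\<lambda>j. u * s j)"
  have u: "0 < u" "u < 1" "\<tau> * u = 1" using \<tau> by (auto simp: u_def \<tau>_def)
  have d: "d \<in> bsub Nb i" using s by (auto simp: bsub_def d_def)
  have "bnorm B Nb i d = \<bar>u\<bar> * \<tau>" unfolding d_def \<tau>_def by (rule bnorm_scale)
  then have d_norm: "bnorm B Nb i d = 1" using u by (simp add: mult.commute)
  have z: "z \<in> bsub Nb i" by (simp add: z_def blk_def bsub_def)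
  have "\<Psi> i (\<lambda>j. (1 - u) * z j + u * (z j + s j)) \<le> ereal (1 - u) * \<Psi> i z + ereal u * \<Psi> i (\<lambda>j. z j + s j)"
    using Psi_convex[OF i z bsub_add[OF z s] u(1,2)] .
  moreover have "(\<lambda>j. (1 - u) * z j + u * (z j + s j)) = (\<lambda>j. z j + d j)"
    by (auto simp: d_def algebra_simps)
  ultimately have Psi_d: "\<Psi> i (\<lambda>j. z j + d j) \<le> ereal ((1 - u) * psi i x + u * q)"
    using Psi_blk_eq_psi[OF x i] q by (simp add: z_def)
  have "ereal (Fstar - Fval x + psi i x) \<le> block_model i x d"
    by (rule block_model_lower_bound[OF x i d])
  also have "\<dots> \<le> ereal ((\<Sum>j<Nb i. g j * d j) + L i / 2) + \<Psi> i (\<lambda>j. z j + d j)"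
    using d_norm by (simp add: block_model_def z_def g_def)
  also have "\<dots> \<le> ereal ((\<Sum>j<Nb i. g j * d j) + L i / 2) + ereal ((1 - u) * psi i x + u * q)"
    using Psi_d by (rule add_left_mono)
  finally have "Fstar - Fval x + psi i x \<le> (\<Sum>j<Nb i. g j * d j) + L i / 2 + ((1 - u) * psi i x + u * q)"
    by simp
  moreover have "(\<Sum>j<Nb i. g j * d j) \<le> dnorm Binv Nb i g"
    using block_cauchy_schwarz[OF i, of g d] d_norm by simp
  ultimately have "Fstar - Fval x + psi i x \<le> (dnorm Binv Nb i g + L i / 2) + ((1 - u) * psi i x + u * q)"
    by linarith
  then have "\<tau> * (Fstar - Fval x + psi i x)
      \<le> \<tau> * ((dnorm Binv Nb i g + L i / 2) + ((1 - u) * psi i x + u * q))"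
    using \<tau> by (intro mult_left_mono) (simp_all add: \<tau>_def)
  also have "\<dots> = \<tau> * (dnorm Binv Nb i g + L i / 2) + (\<tau> * psi i x - psi i x + q)"
  proof -
    have p: "\<tau> * ((1 - u) * psi i x) = \<tau> * psi i x - psi i x"
      using u(3) by (simp add: left_diff_distrib right_diff_distrib mult.assoc[symmetric])
    have q: "\<tau> * (u * q) = q"
      using u(3) by (simp add: mult.assoc[symmetric])
    show ?thesis by (simp add: distrib_left p q)
  qed
  finally show ?thesis
    by (simp add: \<tau>_def g_def algebra_simps)
qed

text \<open>The quadratic term of the block model grows faster than the affine lower bound on \<open>\<Psi>\<^sub>i\<close>,
  so sublevel sets of the block model are bounded.\<close>

lemma block_model_sublevel_bounded:
  assumes x: "F x \<noteq> \<infinity>" and i: "i < n"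
  obtains R where "\<And>s. s \<in> bsub Nb i \<Longrightarrow> block_model i x s \<le> ereal (psi i x + 1) \<Longrightarrow> bnorm B Nb i s \<le> R"
proof
  define dg where "dg = dnorm Binv Nb i (blk \<sigma> Nb i (gf x))"
  define A where "A = 2 * dg + L i / 2 - (Fstar - Fval x)"
  fix s assume s: "s \<in> bsub Nb i" and le: "block_model i x s \<le> ereal (psi i x + 1)"
  show "bnorm B Nb i s \<le> max 1 (2 * (1 + \<bar>A\<bar>) / L i)"
  proof (cases "bnorm B Nb i s \<le> 1")
    case False
    define \<tau> where "\<tau> = bnorm B Nb i s"
    have \<tau>: "1 < \<tau>" using False by (simp add: \<tau>_def)
    have "\<Psi> i (\<lambda>j. blk \<sigma> Nb i x j + s j) \<noteq> \<infinity>" using le by (auto simp: block_model_def)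
    moreover have "\<Psi> i (\<lambda>j. blk \<sigma> Nb i x j + s j) \<noteq> -\<infinity>"
      using Psi_neq_minf[OF i] s by (simp add: bsub_def blk_def)
    ultimately obtain q where q: "\<Psi> i (\<lambda>j. blk \<sigma> Nb i x j + s j) = ereal q"
      by (cases "\<Psi> i (\<lambda>j. blk \<sigma> Nb i x j + s j)") auto
    have "(\<Sum>j<Nb i. blk \<sigma> Nb i (gf x) j * s j) + L i / 2 * \<tau>\<^sup>2 + q \<le> psi i x + 1"
      using le q by (simp add: block_model_def \<tau>_def)
    moreover have "- (dg * \<tau>) \<le> (\<Sum>j<Nb i. blk \<sigma> Nb i (gf x) j * s j)"
      using block_cauchy_schwarz[OF i, of "blk \<sigma> Nb i (gf x)" s] by (simp add: dg_def \<tau>_def)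
    moreover have "psi i x + \<tau> * (Fstar - Fval x - dg - L i / 2) \<le> q"
      using Psi_ray_lower_bound[OF x i s _ q] \<tau> by (simp add: \<tau>_def dg_def)
    moreover have "A * \<tau> = 2 * (dg * \<tau>) - \<tau> * (Fstar - Fval x - dg - L i / 2) - dg * \<tau>"
      by (simp add: A_def algebra_simps)
    ultimately have "L i / 2 * \<tau>\<^sup>2 \<le> 1 + A * \<tau>"
      by linarith
    also have "\<dots> \<le> \<tau> * (1 + \<bar>A\<bar>)"
    proof -
      have "A * \<tau> \<le> \<bar>A\<bar> * \<tau>" using \<tau> by (intro mult_right_mono) auto
      moreover have "\<tau> * (1 + \<bar>A\<bar>) = \<tau> + \<bar>A\<bar> * \<tau>" by (simp add: algebra_simps)
      ultimately show ?thesis using \<tau> by linarith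
    qed
    finally have "L i / 2 * \<tau> \<le> 1 + \<bar>A\<bar>"
      using \<tau> by (simp add: power2_eq_square)
    then have "\<tau> \<le> 2 * (1 + \<bar>A\<bar>) / L i"
      using L_pos i by (simp add: field_simps)
    then show ?thesis by (simp add: \<tau>_def)
  qed simp
qed

lemma bsub_coordinate_bound:
  assumes i: "i < n" and s: "s \<in> bsub Nb i"
  shows "\<bar>s j\<bar> \<le> (\<Sum>l<Nb i. dnorm Binv Nb i (\<lambda>p. if p = l then 1 else 0)) * bnorm B Nb i s"
proof (cases "j < Nb i")
  case True
  let ?e = "\<lambda>p. if p = j then 1 else (0::real)"
  have "(\<Sum>l<Nb i. ?e l * s l) = (\<Sum>l<Nb i. if l = j then s j else 0)" by (intro sum.cong) auto
  then have "(\<Sum>l<Nb i. ?e l * s l) = s j" using True by simp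
  then have "\<bar>s j\<bar> \<le> dnorm Binv Nb i ?e * bnorm B Nb i s"
    using block_cauchy_schwarz[OF i, of ?e s] by simp
  also have "\<dots> \<le> (\<Sum>l<Nb i. dnorm Binv Nb i (\<lambda>p. if p = l then 1 else 0)) * bnorm B Nb i s"
    using True i by (intro mult_right_mono member_le_sum bnorm_nonneg dnorm_nonneg) auto
  finally show ?thesis .
next
  case False
  then show ?thesis
    using s i by (auto simp: bsub_def intro!: mult_nonneg_nonneg sum_nonneg dnorm_nonneg bnorm_nonneg)
qed

lemma block_model_sublevel_coordinate_bound:
  assumes x: "F x \<noteq> \<infinity>" and i: "i < n"
  obtains C where "\<And>s j. s \<in> bsub Nb i \<Longrightarrow> block_model i x s \<le> ereal (psi i x + 1) \<Longrightarrow> \<bar>s j\<bar> \<le> C"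
proof -
  obtain R where R: "\<And>s. s \<in> bsub Nb i \<Longrightarrow> block_model i x s \<le> ereal (psi i x + 1) \<Longrightarrow> bnorm B Nb i s \<le> R"
    using block_model_sublevel_bounded[OF x i] by blast
  define D where "D = (\<Sum>l<Nb i. dnorm Binv Nb i (\<lambda>p. if p = l then 1 else 0))"
  have D: "0 \<le> D" unfolding D_def using i by (intro sum_nonneg dnorm_nonneg)
  show thesis
  proof (rule that)
    fix s j assume s: "s \<in> bsub Nb i" and sublevel: "block_model i x s \<le> ereal (psi i x + 1)"
    have "\<bar>s j\<bar> \<le> D * bnorm B Nb i s"
      unfolding D_def by (rule bsub_coordinate_bound[OF i s])
    also have "\<dots> \<le> D * R"
      using R[OF s sublevel] D by (rule mult_left_mono)
    finally show "\<bar>s j\<bar> \<le> D * R" .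
  qed
qed

lemma block_model_INF_finite:
  assumes x: "F x \<noteq> \<infinity>" and i: "i < n"
  obtains v where "(INF s\<in>bsub Nb i. block_model i x s) = ereal v" "v \<le> psi i x"
proof -
  have "ereal (Fstar - Fval x + psi i x) \<le> (INF s\<in>bsub Nb i. block_model i x s)"
    using block_model_lower_bound[OF x i] by (rule INF_greatest)
  moreover have "(INF s\<in>bsub Nb i. block_model i x s) \<le> ereal (psi i x)"
    using INF_lower[of "\<lambda>_. 0" "bsub Nb i" "block_model i x"] block_model_zero[OF x i]
    by (simp add: bsub_def)
  ultimately show thesis
    using that by (cases "INF s\<in>bsub Nb i. block_model i x s") auto
qed

lemma block_model_lsc:
  assumes i: "i < n" and ts: "\<And>k. ts k \<in> bsub Nb i" and lim: "ts \<longlonglongrightarrow> t"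
    and le: "\<And>k. block_model i x (ts k) \<le> ereal (a k)" and a: "a \<longlonglongrightarrow> a0"
  shows "block_model i x t \<le> ereal a0"
proof -
  define z where "z = blk \<sigma> Nb i x"
  define \<phi> where "\<phi> = (\<lambda>t. (\<Sum>j<Nb i. blk \<sigma> Nb i (gf x) j * t j) + L i / 2 * qform (B i) (Nb i) t)"
  define epi where "epi = {(y, c::real). y \<in> bsub Nb i \<and> \<Psi> i y \<le> ereal c}"
  have model: "block_model i x t = ereal (\<phi> t) + \<Psi> i (\<lambda>j. z j + t j)" for t
    using i by (simp add: block_model_def \<phi>_def z_def bnorm_sq)
  have z: "z \<in> bsub Nb i" by (simp add: z_def blk_def bsub_def)
  have coord: "(\<lambda>k. ts k j) \<longlonglongrightarrow> t j" for j
    using lim by (rule tendsto_coordinate)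
  have "(\<lambda>k. \<phi> (ts k)) \<longlonglongrightarrow> \<phi> t"
    unfolding \<phi>_def qform_def by (intro tendsto_add tendsto_sum tendsto_mult tendsto_const coord)
  then have pair_lim: "(\<lambda>k. ((\<lambda>j. z j + ts k j), a k - \<phi> (ts k))) \<longlonglongrightarrow> ((\<lambda>j. z j + t j), a0 - \<phi> t)"
    by (intro tendsto_Pair tendsto_shift_coordinates[OF lim] tendsto_diff[OF a])
  have "closed epi"
    using Psi i by (simp add: eclosed_on_def epi_def)
  moreover have "((\<lambda>j. z j + ts k j), a k - \<phi> (ts k)) \<in> epi" for k
  proof -
    have "\<Psi> i (\<lambda>j. z j + ts k j) \<le> ereal (a k - \<phi> (ts k))"
      using le[of k] unfolding model by (cases "\<Psi> i (\<lambda>j. z j + ts k j)") auto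
    then show ?thesis using bsub_add[OF z ts] by (simp add: epi_def)
  qed
  ultimately have "((\<lambda>j. z j + t j), a0 - \<phi> t) \<in> epi"
    using pair_lim by (rule closed_sequentially)
  then have "\<Psi> i (\<lambda>j. z j + t j) \<le> ereal (a0 - \<phi> t)" by (simp add: epi_def)
  then show ?thesis
    unfolding model by (cases "\<Psi> i (\<lambda>j. z j + t j)") auto
qed

lemma block_model_has_minimizer:
  assumes x: "F x \<noteq> \<infinity>" and i: "i < n"
  shows "\<exists>t. t \<in> bsub Nb i \<and> (\<forall>s\<in>bsub Nb i. block_model i x t \<le> block_model i x s)"
proof -
  obtain C where C: "\<And>s j. s \<in> bsub Nb i \<Longrightarrow> block_model i x s \<le> ereal (psi i x + 1) \<Longrightarrow> \<bar>s j\<bar> \<le> C"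
    using block_model_sublevel_coordinate_bound[OF x i] by blast
  define v where "v = (INF s\<in>bsub Nb i. block_model i x s)"
  obtain v' where v': "v = ereal v'" "v' \<le> psi i x"
    using block_model_INF_finite[OF x i] unfolding v_def by blast
  have "\<forall>k. \<exists>s. s \<in> bsub Nb i \<and> block_model i x s < ereal (v' + inverse (real (Suc k)))"
  proof
    fix k
    have "v < ereal (v' + inverse (real (Suc k)))" using v' by simp
    then show "\<exists>s. s \<in> bsub Nb i \<and> block_model i x s < ereal (v' + inverse (real (Suc k)))"
      unfolding v_def INF_less_iff Bex_def .
  qed
  then obtain ts where ts: "\<And>k. ts k \<in> bsub Nb i"
    and ts_lt: "\<And>k. block_model i x (ts k) < ereal (v' + inverse (real (Suc k)))"
    by metis
  have "\<bar>ts k j\<bar> \<le> C" for k j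
  proof (rule C[OF ts])
    have "inverse (real (Suc k)) \<le> 1" by (simp add: inverse_le_1_iff)
    then have "ereal (v' + inverse (real (Suc k))) \<le> ereal (psi i x + 1)"
      using v'(2) by simp
    with less_imp_le[OF ts_lt[of k]] show "block_model i x (ts k) \<le> ereal (psi i x + 1)"
      by (rule order_trans)
  qed
  then obtain t r where t: "t \<in> bsub Nb i" and r: "strict_mono r" and lim: "(ts \<circ> r) \<longlonglongrightarrow> t"
    by (rule bsub_bounded_convergent_subseq[OF ts])
  have "block_model i x t \<le> ereal (v' + 0)"
  proof (rule block_model_lsc[OF i _ lim])
    show "(ts \<circ> r) k \<in> bsub Nb i" for k using ts by simp
    show "block_model i x ((ts \<circ> r) k) \<le> ereal (v' + inverse (real (Suc (r k))))" for k
      using ts_lt[of "r k"] by simp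
    have "(\<lambda>k. inverse (real (Suc (r k)))) \<longlonglongrightarrow> 0"
      using LIMSEQ_subseq_LIMSEQ[OF LIMSEQ_inverse_real_of_nat r] by (simp add: o_def)
    then show "(\<lambda>k. v' + inverse (real (Suc (r k)))) \<longlonglongrightarrow> v' + 0"
      by (rule tendsto_add[OF tendsto_const])
  qed
  then have "block_model i x t \<le> block_model i x s" if "s \<in> bsub Nb i" for s
    using v'(1) INF_lower[OF that, of "block_model i x"] by (simp add: v_def)
  then show ?thesis using t by blast
qed

lemma Tblk_minimizes:
  assumes "F x \<noteq> \<infinity>" "i < n"
  shows "Tblk gf L B \<Psi> \<sigma> Nb i x \<in> bsub Nb i"
    and "s \<in> bsub Nb i \<Longrightarrow> block_model i x (Tblk gf L B \<Psi> \<sigma> Nb i x) \<le> block_model i x s"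
  using someI_ex[OF block_model_has_minimizer[OF assms]]
  unfolding Tblk_eq_block_model_argmin[symmetric] by auto

section \<open>Expected decrease per step\<close>

definition ucdc_step :: "nat \<Rightarrow> real^'N \<Rightarrow> real^'N" where
  "ucdc_step i x = x + Uemb \<sigma> Nb i (Tblk gf L B \<Psi> \<sigma> Nb i x)"

lemma ucdc_eq_fold: "ucdc gf L B \<Psi> \<sigma> Nb x0 is = fold ucdc_step is x0"
  by (simp add: ucdc_def ucdc_step_def[abs_def])

lemma F_ucdc_step_le:
  assumes x: "F x \<noteq> \<infinity>" and i: "i < n" and s: "s \<in> bsub Nb i"
  shows "F (ucdc_step i x) \<le> ereal (Fval x - psi i x) + block_model i x s"
  using F_block_update_le[OF x i Tblk_minimizes(1)[OF x i]] add_left_mono[OF Tblk_minimizes(2)[OF x i s]]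
  unfolding ucdc_step_def by (rule order_trans)

lemma F_ucdc_step_finite: "F x \<noteq> \<infinity> \<Longrightarrow> i < n \<Longrightarrow> F (ucdc_step i x) \<noteq> \<infinity>"
  using F_ucdc_step_le[of x i "\<lambda>_. 0"] block_model_zero[of x i] by (auto simp: bsub_def)

lemma F_ucdc_finite:
  assumes "F x0 \<noteq> \<infinity>" "set js \<subseteq> {..<n}"
  shows "F (ucdc gf L B \<Psi> \<sigma> Nb x0 js) \<noteq> \<infinity>"
  unfolding ucdc_eq_fold
  using fold_invariant[of js "\<lambda>i. i < n" "\<lambda>x. F x \<noteq> \<infinity>" x0 ucdc_step] assms F_ucdc_step_finite
  by auto

lemma Fval_ucdc_step_le:
  assumes "F x \<noteq> \<infinity>" "i < n" "s \<in> bsub Nb i" "block_model i x s = ereal w"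
  shows "Fval (ucdc_step i x) \<le> Fval x - psi i x + w"
  using F_ucdc_step_le[OF assms(1-3)] F_eq_Fval[OF F_ucdc_step_finite[OF assms(1,2)]] assms(4)
  by simp

text \<open>Averaged over the blocks, one step is at least as good as moving all blocks towards any
  \<open>y\<close> at once in the separable model \<open>f(x) + \<langle>\<nabla>f(x), y - x\<rangle> + \<parallel>y - x\<parallel>\<^sub>L\<^sup>2/2 + \<Psi>(y)\<close>.\<close>

lemma sum_Fval_ucdc_step_le:
  assumes x: "F x \<noteq> \<infinity>" and y: "F y \<noteq> \<infinity>"
  shows "(\<Sum>i<n. Fval (ucdc_step i x))
    \<le> (real n - 1) * Fval x + Fval y + Lnorm_sq L B \<sigma> Nb n (y - x) / 2"
proof -
  define s where "s i = blk \<sigma> Nb i (y - x)" for i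
  define g where "g i = blk \<sigma> Nb i (gf x)" for i
  have "Fval (ucdc_step i x)
      \<le> Fval x - psi i x + ((\<Sum>j<Nb i. g i j * s i j) + L i / 2 * (bnorm B Nb i (s i))\<^sup>2 + psi i y)"
    if i: "i < n" for i
  proof (rule Fval_ucdc_step_le[OF x i])
    show "s i \<in> bsub Nb i" by (simp add: s_def blk_def bsub_def)
    have "(\<lambda>j. blk \<sigma> Nb i x j + s i j) = blk \<sigma> Nb i y" by (auto simp: s_def blk_def)
    then show "block_model i x (s i)
        = ereal ((\<Sum>j<Nb i. g i j * s i j) + L i / 2 * (bnorm B Nb i (s i))\<^sup>2 + psi i y)"
      using Psi_blk_eq_psi[OF y i] by (simp add: block_model_def g_def)
  qed
  then have "(\<Sum>i<n. Fval (ucdc_step i x)) \<le> (\<Sum>i<n. Fval x - psi i x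
      + ((\<Sum>j<Nb i. g i j * s i j) + L i / 2 * (bnorm B Nb i (s i))\<^sup>2 + psi i y))"
    by (intro sum_mono) simp
  also have "\<dots> = real n * Fval x - (\<Sum>i<n. psi i x) + inner (gf x) (y - x)
      + Lnorm_sq L B \<sigma> Nb n (y - x) / 2 + (\<Sum>i<n. psi i y)"
    by (simp add: sum.distrib sum_subtractf inner_eq_sum_blocks s_def g_def Lnorm_sq_def
        sum_divide_distrib)
  also have "\<dots> \<le> (real n - 1) * Fval x + Fval y + Lnorm_sq L B \<sigma> Nb n (y - x) / 2"
    using gradient_inequality[of x y] by (simp add: Fval_def algebra_simps)
  finally show ?thesis .
qed

lemma F_convex_combination:
  assumes x: "F x \<noteq> \<infinity>" and y: "F y \<noteq> \<infinity>" and \<alpha>: "0 \<le> \<alpha>" "\<alpha> \<le> 1"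
  shows "F ((1 - \<alpha>) *\<^sub>R x + \<alpha> *\<^sub>R y) \<le> ereal ((1 - \<alpha>) * Fval x + \<alpha> * Fval y)"
proof -
  let ?z = "(1 - \<alpha>) *\<^sub>R x + \<alpha> *\<^sub>R y"
  have f: "f ?z \<le> (1 - \<alpha>) * f x + \<alpha> * f y"
    using convex_onD[OF f_convex, of \<alpha> x y] \<alpha> by simp
  have Psi_z: "\<Psi> i (blk \<sigma> Nb i ?z) \<le> ereal ((1 - \<alpha>) * psi i x + \<alpha> * psi i y)" if i: "i < n" for i
  proof -
    have blk_z: "blk \<sigma> Nb i ?z = (\<lambda>j. (1 - \<alpha>) * blk \<sigma> Nb i x j + \<alpha> * blk \<sigma> Nb i y j)"
      by (auto simp: blk_def)
    show ?thesis
    proof (cases "\<alpha> = 0 \<or> \<alpha> = 1")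
      case True
      then show ?thesis using Psi_blk_eq_psi[OF x i] Psi_blk_eq_psi[OF y i] by (auto simp: blk_z)
    next
      case False
      then have "0 < \<alpha>" "\<alpha> < 1" using \<alpha> by auto
      then have "\<Psi> i (blk \<sigma> Nb i ?z)
          \<le> ereal (1 - \<alpha>) * \<Psi> i (blk \<sigma> Nb i x) + ereal \<alpha> * \<Psi> i (blk \<sigma> Nb i y)"
        unfolding blk_z by (intro Psi_convex i) (simp_all add: blk_def bsub_def)
      then show ?thesis using Psi_blk_eq_psi[OF x i] Psi_blk_eq_psi[OF y i] by simp
    qed
  qed
  have "F ?z \<le> ereal (f ?z) + ereal (\<Sum>i<n. (1 - \<alpha>) * psi i x + \<alpha> * psi i y)"
    unfolding Fobj_def sum_ereal[symmetric] by (intro add_left_mono sum_mono Psi_z) simp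
  also have "\<dots> \<le> ereal ((1 - \<alpha>) * Fval x + \<alpha> * Fval y)"
  proof -
    have "(\<Sum>i<n. (1 - \<alpha>) * psi i x + \<alpha> * psi i y) = (1 - \<alpha>) * (\<Sum>i<n. psi i x) + \<alpha> * (\<Sum>i<n. psi i y)"
      by (simp add: sum.distrib sum_distrib_left)
    then show ?thesis using f by (simp add: Fval_def algebra_simps)
  qed
  finally show ?thesis .
qed

lemma quadratic_growth:
  assumes strongly_convex: "\<forall>x y g. F x \<noteq> \<infinity> \<longrightarrow> F y \<noteq> \<infinity> \<longrightarrow> subgrad F y g \<longrightarrow>
          F y + ereal (inner g (x - y)) + ereal (\<mu> / 2 * Lnorm_sq L B \<sigma> Nb n (x - y)) \<le> F x"
    and x: "F x \<noteq> \<infinity>"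
  shows "\<mu> / 2 * Lnorm_sq L B \<sigma> Nb n (x - xs) \<le> Fval x - Fstar"
proof -
  have "subgrad F xs 0" using xs_min by (simp add: subgrad_def zero_ereal_def[symmetric])
  from strongly_convex[rule_format, OF x xs_finite this]
  have "F xs + ereal (\<mu> / 2 * Lnorm_sq L B \<sigma> Nb n (x - xs)) \<le> F x"
    by (simp add: zero_ereal_def[symmetric])
  then show ?thesis using F_eq_Fval[OF x] F_eq_Fval[OF xs_finite] by (simp add: Fstar_def)
qed

text \<open>The choice of \<open>y\<close> on the segment from \<open>x\<close> to the minimiser, at step
  \<open>\<alpha> = min 1 (\<mu>/2)\<close>, is where the constant \<open>\<gamma>\<^sub>\<mu>\<close> comes from.\<close>

lemma sum_gap_ucdc_step_le:
  assumes growth: "\<And>x. F x \<noteq> \<infinity> \<Longrightarrow> \<mu> / 2 * Lnorm_sq L B \<sigma> Nb n (x - xs) \<le> Fval x - Fstar"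
    and \<mu>: "0 < \<mu>" and x: "F x \<noteq> \<infinity>"
  shows "(\<Sum>i<n. Fval (ucdc_step i x) - Fstar) \<le> (real n - (1 - gamma_mu \<mu>)) * (Fval x - Fstar)"
proof -
  define \<alpha> where "\<alpha> = min 1 (\<mu> / 2)"
  define y where "y = (1 - \<alpha>) *\<^sub>R x + \<alpha> *\<^sub>R xs"
  define D where "D = Fval x - Fstar"
  define Q where "Q = Lnorm_sq L B \<sigma> Nb n (x - xs)"
  have \<alpha>: "0 \<le> \<alpha>" "\<alpha> \<le> 1" using \<mu> by (auto simp: \<alpha>_def)
  have Fy: "F y \<le> ereal ((1 - \<alpha>) * Fval x + \<alpha> * Fstar)"
    unfolding y_def Fstar_def by (rule F_convex_combination[OF x xs_finite \<alpha>])
  then have y: "F y \<noteq> \<infinity>" by auto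
  have "Fval y \<le> (1 - \<alpha>) * Fval x + \<alpha> * Fstar" using Fy F_eq_Fval[OF y] by simp
  moreover have "Lnorm_sq L B \<sigma> Nb n (y - x) = \<alpha>\<^sup>2 * Q"
    using Lnorm_sq_scaleR[of L B \<sigma> Nb n "- \<alpha>" "x - xs"] by (simp add: y_def Q_def algebra_simps)
  moreover have "\<alpha>\<^sup>2 * Q / 2 \<le> \<alpha>\<^sup>2 / \<mu> * D"
  proof -
    have "\<alpha>\<^sup>2 * (\<mu> / 2 * Q) \<le> \<alpha>\<^sup>2 * D" using growth[OF x] by (intro mult_left_mono) (auto simp: Q_def D_def)
    then show ?thesis using \<mu> by (simp add: field_simps)
  qed
  ultimately have "(\<Sum>i<n. Fval (ucdc_step i x)) \<le> real n * Fval x - (\<alpha> - \<alpha>\<^sup>2 / \<mu>) * D"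
    using sum_Fval_ucdc_step_le[OF x y] by (simp add: D_def algebra_simps)
  moreover have "(real n - (1 - gamma_mu \<mu>)) * D = real n * Fval x - real n * Fstar - (\<alpha> - \<alpha>\<^sup>2 / \<mu>) * D"
    unfolding one_minus_gamma_mu_eq[OF \<mu>, folded \<alpha>_def] left_diff_distrib
    by (simp add: D_def right_diff_distrib)
  ultimately show ?thesis
    by (simp add: sum_subtractf D_def)
qed

lemma sum_index_seqs_gap_le:
  assumes growth: "\<And>x. F x \<noteq> \<infinity> \<Longrightarrow> \<mu> / 2 * Lnorm_sq L B \<sigma> Nb n (x - xs) \<le> Fval x - Fstar"
    and \<mu>: "0 < \<mu>" and x0: "F x0 \<noteq> \<infinity>"
  shows "(\<Sum>js\<in>index_seqs n k. Fval (ucdc gf L B \<Psi> \<sigma> Nb x0 js) - Fstar)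
    \<le> (real n - (1 - gamma_mu \<mu>)) ^ k * (Fval x0 - Fstar)"
  unfolding ucdc_eq_fold
proof (rule sum_index_seqs_fold_le[where P = "\<lambda>x. F x \<noteq> \<infinity>" and V = "\<lambda>x. Fval x - Fstar"])
  show "(\<Sum>i<n. Fval (ucdc_step i x) - Fstar) \<le> (real n - (1 - gamma_mu \<mu>)) * (Fval x - Fstar)"
    if "F x \<noteq> \<infinity>" for x
    by (rule sum_gap_ucdc_step_le[OF growth \<mu> that])
qed (use F_ucdc_step_finite x0 one_minus_gamma_mu_bounds[OF \<mu>] n_pos in auto)

lemma F_ucdc_minus_INF:
  assumes "F x0 \<noteq> \<infinity>" "js \<in> index_seqs n k"
  shows "F (ucdc gf L B \<Psi> \<sigma> Nb x0 js) - (INF x. F x) = ereal (Fval (ucdc gf L B \<Psi> \<sigma> Nb x0 js) - Fstar)"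
    and "Fstar \<le> Fval (ucdc gf L B \<Psi> \<sigma> Nb x0 js)"
  using F_ucdc_finite[OF assms(1), of js] assms(2) Fstar_le_Fval
  by (simp_all add: index_seqs_def INF_F_eq_Fstar F_eq_Fval)

end

theorem theorem7:
  fixes f :: "real^'N::finite \<Rightarrow> real" and gf :: "real^'N \<Rightarrow> real^'N"
    and \<sigma> :: "nat \<Rightarrow> 'N" and Nb :: "nat \<Rightarrow> nat" and n :: nat
    and B Binv :: "nat \<Rightarrow> nat \<Rightarrow> nat \<Rightarrow> real" and L :: "nat \<Rightarrow> real"
    and \<Psi> :: "nat \<Rightarrow> (nat \<Rightarrow> real) \<Rightarrow> ereal"
    and \<mu> \<epsilon> \<rho> :: real and k :: nat and x0 :: "real^'N"
  assumes perm: "bij_betw \<sigma> {..<CARD('N)} UNIV"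
    and blocks: "(\<Sum>i<n. Nb i) = CARD('N)" "\<forall>i<n. 0 < Nb i"
    and Bpd: "\<forall>i<n. pos_def_mat (B i) (Nb i)"
    and Binv: "\<forall>i<n. is_inv_mat (B i) (Binv i) (Nb i)"
    and f_convex: "convex_on UNIV f"
    and f_grad: "\<forall>x. (f has_derivative (\<lambda>h. inner (gf x) h)) (at x)"
    and L_pos: "\<forall>i<n. 0 < L i"
    and lipschitz: "\<forall>x i t. i < n \<longrightarrow> t \<in> bsub Nb i \<longrightarrow>
          dnorm Binv Nb i (\<lambda>j. blk \<sigma> Nb i (gf (x + Uemb \<sigma> Nb i t)) j - blk \<sigma> Nb i (gf x) j)
            \<le> L i * bnorm B Nb i t"
    and Psi: "\<forall>i<n. eproper_on (bsub Nb i) (\<Psi> i) \<and> eclosed_on (bsub Nb i) (\<Psi> i)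
                    \<and> econvex_on (bsub Nb i) (\<Psi> i)"
    and has_min: "\<exists>xs. \<forall>x. Fobj f \<Psi> \<sigma> Nb n xs \<le> Fobj f \<Psi> \<sigma> Nb n x"
    and strongly_convex: "\<forall>x y g. Fobj f \<Psi> \<sigma> Nb n x \<noteq> \<infinity> \<longrightarrow> Fobj f \<Psi> \<sigma> Nb n y \<noteq> \<infinity> \<longrightarrow>
          subgrad (Fobj f \<Psi> \<sigma> Nb n) y g \<longrightarrow>
          Fobj f \<Psi> \<sigma> Nb n y + ereal (inner g (x - y)) + ereal (\<mu> / 2 * Lnorm_sq L B \<sigma> Nb n (x - y))
            \<le> Fobj f \<Psi> \<sigma> Nb n x"
    and mu_pos: "0 < \<mu>"
    and eps_pos: "0 < \<epsilon>"
    and rho: "0 < \<rho>" "\<rho> < 1"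
    and x0_dom: "Fobj f \<Psi> \<sigma> Nb n x0 \<noteq> \<infinity>"
    and k_bound: "real k \<ge> real n / (1 - gamma_mu \<mu>) *
          ln (real_of_ereal (Fobj f \<Psi> \<sigma> Nb n x0 - (INF x. Fobj f \<Psi> \<sigma> Nb n x)) / (\<rho> * \<epsilon>))"
  shows "measure_pmf.prob (pmf_of_set (index_seqs n k))
           {is. Fobj f \<Psi> \<sigma> Nb n (ucdc gf L B \<Psi> \<sigma> Nb x0 is) - (INF x. Fobj f \<Psi> \<sigma> Nb n x) \<le> ereal \<epsilon>}
         \<ge> 1 - \<rho>"
proof -
  let ?F = "Fobj f \<Psi> \<sigma> Nb n"
  obtain xs where xs_min: "\<forall>x. ?F xs \<le> ?F x" using has_min by blast
  then have xs_finite: "?F xs \<noteq> \<infinity>" using x0_dom by (metis ereal_infty_less_eq(1))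
  interpret block_problem_min \<sigma> Nb n f gf B Binv L \<Psi> xs
    by unfold_locales (use perm blocks(1) Bpd Binv f_convex f_grad L_pos lipschitz Psi xs_min xs_finite in auto)
  define A where "A = index_seqs n k"
  define gap where "gap js = Fval (ucdc gf L B \<Psi> \<sigma> Nb x0 js) - Fstar" for js
  have "(\<Sum>js\<in>A. gap js) \<le> (real n - (1 - gamma_mu \<mu>)) ^ k * (Fval x0 - Fstar)"
    unfolding A_def gap_def using quadratic_growth[OF strongly_convex] mu_pos x0_dom
    by (rule sum_index_seqs_gap_le)
  also have "\<dots> \<le> \<rho> * \<epsilon> * real n ^ k"
    using k_bound one_minus_gamma_mu_bounds[OF mu_pos] n_pos Fstar_le_Fval[OF x0_dom] rho eps_pos
    by (intro power_decay_le) (auto simp: INF_F_eq_Fstar F_eq_Fval[OF x0_dom])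
  finally have "(\<Sum>js\<in>A. gap js) / (\<epsilon> * card A) \<le> \<rho>"
    using eps_pos n_pos by (simp add: A_def card_index_seqs field_simps)
  moreover have "1 - (\<Sum>js\<in>A. gap js) / (\<epsilon> * card A) \<le> measure_pmf.prob (pmf_of_set A)
      {is. ?F (ucdc gf L B \<Psi> \<sigma> Nb x0 is) - (INF x. ?F x) \<le> ereal \<epsilon>}"
    using F_ucdc_minus_INF[OF x0_dom] n_pos eps_pos
    by (intro markov_pmf_of_set) (auto simp: A_def gap_def finite_index_seqs index_seqs_nonempty)
  ultimately show ?thesis by (simp add: A_def)
qed

end
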